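(* Let $G=\mathbb Z_m*\mathbb Z_n$ with $m\ge2$, $n\ge3$, and let $\Delta_1$ be its first Laplacian as below. For $x\in\ell^2(G)^{\oplus2}$ we have $\Delta_1x=0$ if and only if there exist $z\in\ell^2(G)^{\oplus2}$ and $a\in\mathrm{im}(1-p)\cap\mathrm{im}(1-q)$ such that \[x=(I-C)z\qquad\text{and}\qquad \begin{bmatrix}1-s&0\\0&1-t\end{bmatrix}z=\frac{1}{\sqrt2}\begin{bmatrix}a\\-a\end{bmatrix}.\]
   Context: $G=\langle s,t\mid s^m,t^n\rangle$, with $s,t$ generating $\mathbb Z_m,\mathbb Z_n$; group ring elements act on $\ell^2(G)$ by the left regular representation. The first Laplacian (of the cochain complex from the presentation complex) is $\Delta_1=\begin{bmatrix}2-s-s^{-1}+m\sum_{0\le i<m}s^i & (1-s^{-1})(1-t)\\ (1-t^{-1})(1-s) & 2-t-t^{-1}+n\sum_{0\le j<n}t^j\end{bmatrix}$ acting on $\ell^2(G)^{\oplus2}$. Let $p=\frac1m\sum_{0\le i<m}s^i$, $q=\frac1n\sum_{0\le j<n}t^j$ (averaging projections), and $C=\mathrm{diag}(p,q)$. *)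

theory Defs
  imports "HOL-Analysis.Analysis"
begin

text \<open>The free product G = Z_m * Z_n, with Z_m generated by s and Z_n generated by t.
  Elements of G are reduced words: alternating sequences of letters LA i (standing for s^i,
  0 < i < m) and LB j (standing for t^j, 0 < j < n).\<close>

datatype letter = LA nat | LB nat

fun rw :: "nat \<Rightarrow> nat \<Rightarrow> letter list \<Rightarrow> bool" where
  "rw m n [] = True"
| "rw m n (LA i # w) =
     (0 < i \<and> i < m \<and> rw m n w \<and> (case w of LA _ # _ \<Rightarrow> False | _ \<Rightarrow> True))"
| "rw m n (LB j # w) =
     (0 < j \<and> j < n \<and> rw m n w \<and> (case w of LB _ # _ \<Rightarrow> False | _ \<Rightarrow> True))"

definition lmulA :: "nat \<Rightarrow> nat \<Rightarrow> letter list \<Rightarrow> letter list" where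
  "lmulA m k w = (case w of
      LA i # rest \<Rightarrow> (if (k + i) mod m = 0 then rest else LA ((k + i) mod m) # rest)
    | _ \<Rightarrow> (if k mod m = 0 then w else LA (k mod m) # w))"

definition lmulB :: "nat \<Rightarrow> nat \<Rightarrow> letter list \<Rightarrow> letter list" where
  "lmulB n k w = (case w of
      LB j # rest \<Rightarrow> (if (k + j) mod n = 0 then rest else LB ((k + j) mod n) # rest)
    | _ \<Rightarrow> (if k mod n = 0 then w else LB (k mod n) # w))"

type_synonym vec = "letter list \<Rightarrow> complex"

definition l2 :: "nat \<Rightarrow> nat \<Rightarrow> vec set" where
  "l2 m n = {f. (\<forall>w. \<not> rw m n w \<longrightarrow> f w = 0) \<and> (\<lambda>w. (cmod (f w))\<^sup>2) summable_on UNIV}"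

text \<open>Left regular representation: (g f)(h) = f(g^{-1} h).
  actS m n k is the operator of s^k, actT m n k the operator of t^k.\<close>

definition actS :: "nat \<Rightarrow> nat \<Rightarrow> nat \<Rightarrow> vec \<Rightarrow> vec" where
  "actS m n k f = (\<lambda>w. if rw m n w then f (lmulA m ((m - k mod m) mod m) w) else 0)"

definition actT :: "nat \<Rightarrow> nat \<Rightarrow> nat \<Rightarrow> vec \<Rightarrow> vec" where
  "actT m n k f = (\<lambda>w. if rw m n w then f (lmulB n ((n - k mod n) mod n) w) else 0)"

definition opS :: "nat \<Rightarrow> nat \<Rightarrow> vec \<Rightarrow> vec" where "opS m n = actS m n 1"
definition opSi :: "nat \<Rightarrow> nat \<Rightarrow> vec \<Rightarrow> vec" where "opSi m n = actS m n (m - 1)"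
definition opT :: "nat \<Rightarrow> nat \<Rightarrow> vec \<Rightarrow> vec" where "opT m n = actT m n 1"
definition opTi :: "nat \<Rightarrow> nat \<Rightarrow> vec \<Rightarrow> vec" where "opTi m n = actT m n (n - 1)"

definition sumS :: "nat \<Rightarrow> nat \<Rightarrow> vec \<Rightarrow> vec" where
  "sumS m n f = (\<lambda>w. \<Sum>i<m. actS m n i f w)"
definition sumT :: "nat \<Rightarrow> nat \<Rightarrow> vec \<Rightarrow> vec" where
  "sumT m n f = (\<lambda>w. \<Sum>j<n. actT m n j f w)"

definition projP :: "nat \<Rightarrow> nat \<Rightarrow> vec \<Rightarrow> vec" where
  "projP m n f = (\<lambda>w. sumS m n f w / of_nat m)"
definition projQ :: "nat \<Rightarrow> nat \<Rightarrow> vec \<Rightarrow> vec" where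
  "projQ m n f = (\<lambda>w. sumT m n f w / of_nat n)"

definition Lap1_fst :: "nat \<Rightarrow> nat \<Rightarrow> vec \<Rightarrow> vec \<Rightarrow> vec" where
  "Lap1_fst m n x1 x2 = (\<lambda>w.
      2 * x1 w - opS m n x1 w - opSi m n x1 w + of_nat m * sumS m n x1 w
    + (x2 w - opT m n x2 w - opSi m n x2 w + opSi m n (opT m n x2) w))"

definition Lap1_snd :: "nat \<Rightarrow> nat \<Rightarrow> vec \<Rightarrow> vec \<Rightarrow> vec" where
  "Lap1_snd m n x1 x2 = (\<lambda>w.
      (x1 w - opS m n x1 w - opTi m n x1 w + opTi m n (opS m n x1) w)
    + 2 * x2 w - opT m n x2 w - opTi m n x2 w + of_nat n * sumT m n x2 w)"

end

theory Submission
  imports Defs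
begin

(* Write d (x1, x2) = (1 - s) x1 + (1 - t) x2. Since (1 - s)^* = 1 - s^-1 and
   m sum_i s^i = m^2 p, the Laplacian is Delta_1 = d^* d + diag (m^2 p, n^2 q). Summing the first
   row over the powers of s kills (1 - s^-1) d x, so Delta_1 x = 0 forces p x1 = 0 and likewise
   q x2 = 0; then d x is fixed by s and t, hence constant on G, and as G is infinite the only
   constant in l^2(G) is 0. So d x = 0, a = sqrt 2 (1 - s) x1 = - sqrt 2 (1 - t) x2 is killed by
   p and q, and z = x is a witness. Conversely x = (I - C) z gives p x1 = q x2 = 0 and
   (1 - s) x1 = (1 - s) z1, (1 - t) x2 = (1 - t) z2, whence d x = 0. *)

lemma int_residue_of_minus:
  fixes r k :: nat
  assumes "0 < r"
  shows "int ((r - k mod r) mod r) = (- int k) mod int r"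
  using assms
  by (smt (verit, del_insts) le_mod_geq mod_le_divisor mod_mod_trivial nat_int_comparison(3)
      of_nat_diff_if of_nat_mod zmod_zminus1_eq_if)

lemma residue_of_minus_add:
  fixes r a b :: nat
  assumes "0 < r"
  shows "((r - a mod r) mod r + (r - b mod r) mod r) mod r = (r - (a + b) mod r) mod r"
proof -
  have "int (((r - a mod r) mod r + (r - b mod r) mod r) mod r)
      = ((- int a) mod int r + (- int b) mod int r) mod int r"
    by (simp only: of_nat_mod[of "_ + _"] of_nat_add int_residue_of_minus[OF assms])
  also have "\<dots> = (- int a + - int b) mod int r"
    by (rule mod_add_eq)
  also have "\<dots> = int ((r - (a + b) mod r) mod r)"
    using assms by (simp add: int_residue_of_minus)
  finally show ?thesis by (simp only: of_nat_eq_iff)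
qed

lemma residue_of_minus_add_self:
  fixes r k :: nat
  assumes "0 < r"
  shows "((r - k mod r) mod r + k) mod r = 0"
proof -
  have "int (((r - k mod r) mod r + k) mod r) = ((- int k) mod int r + int k) mod int r"
    by (simp only: of_nat_mod[of "_ + _"] of_nat_add int_residue_of_minus[OF assms])
  also have "\<dots> = (- int k + int k) mod int r"
    by (rule mod_add_left_eq)
  finally show ?thesis by simp
qed

lemma sum_lessThan_shift_periodic:
  fixes h :: "nat \<Rightarrow> 'b::cancel_comm_monoid_add"
  assumes periodic: "\<And>i. h (i + r) = h i"
  shows "(\<Sum>i<r. h (i + k)) = (\<Sum>i<r. h i)"
proof (induction k)
  case (Suc k)
  have "(\<Sum>i<r. h (i + k)) + h (r + k) = h (0 + k) + (\<Sum>i<r. h (Suc i + k))"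
    using sum.lessThan_Suc_shift[of "\<lambda>i. h (i + k)" r] by simp
  moreover have "h (r + k) = h (0 + k)"
    using periodic[of k] by (simp add: add.commute)
  ultimately show ?case using Suc by (simp add: add.commute)
qed simp

(* g k is left multiplication by the k-th power of a generator of Z_r on the words satisfying R,
   and act k f = f (g (-k) _) is the left regular representation; (r - k mod r) mod r is the
   residue of -k. *)
locale cyclic_action =
  fixes R :: "'a \<Rightarrow> bool" and r :: nat and g :: "nat \<Rightarrow> 'a \<Rightarrow> 'a"
  assumes order_pos: "0 < r"
    and closed: "R w \<Longrightarrow> R (g k w)"
    and g_add: "R w \<Longrightarrow> g a (g b w) = g (a + b) w"
    and g_mod: "g (k mod r) w = g k w"
    and g_0: "R w \<Longrightarrow> g 0 w = w"
begin

definition act :: "nat \<Rightarrow> ('a \<Rightarrow> complex) \<Rightarrow> 'a \<Rightarrow> complex" where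
  "act k f = (\<lambda>w. if R w then f (g ((r - k mod r) mod r) w) else 0)"

definition orbit_sum :: "('a \<Rightarrow> complex) \<Rightarrow> 'a \<Rightarrow> complex" where
  "orbit_sum f = (\<lambda>w. \<Sum>i<r. act i f w)"

definition avg :: "('a \<Rightarrow> complex) \<Rightarrow> 'a \<Rightarrow> complex" where
  "avg f = (\<lambda>w. orbit_sum f w / of_nat r)"

lemma g_residue_of_minus_cancel: "R w \<Longrightarrow> g ((r - k mod r) mod r) (g k w) = w"
  using g_mod[of "(r - k mod r) mod r + k" w]
  by (simp add: g_add residue_of_minus_add_self[OF order_pos] g_0)

lemma inj_on_g: "inj_on (g k) {w. R w}"
  by (rule inj_on_inverseI[where g = "g ((r - k mod r) mod r)"]) (simp add: g_residue_of_minus_cancel)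

lemma act_act: "act a (act b f) = act (a + b) f"
proof -
  have "g ((r - b mod r) mod r) (g ((r - a mod r) mod r) w) = g ((r - (a + b) mod r) mod r) w"
    if "R w" for w
    using that g_mod[of "(r - b mod r) mod r + (r - a mod r) mod r" w]
    by (simp add: g_add residue_of_minus_add[OF order_pos] add.commute)
  then show ?thesis by (simp add: act_def closed fun_eq_iff)
qed

lemma act_mod: "act (k mod r) = act k"
  by (simp add: act_def fun_eq_iff)

lemma act_0: "act 0 f w = (if R w then f w else 0)"
  by (simp add: act_def g_0)

lemma act_order_eq:
  assumes "\<And>w. \<not> R w \<Longrightarrow> f w = 0"
  shows "act r f = f"
proof -
  have "act r f = act 0 f"
    using act_mod[of r] by simp
  then show ?thesis
    using assms by (auto simp: act_0 fun_eq_iff)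
qed

lemma act_zero [simp]: "act k (\<lambda>_. 0) = (\<lambda>_. 0)"
  and act_add [simp]: "act k (\<lambda>w. f w + h w) = (\<lambda>w. act k f w + act k h w)"
  and act_diff [simp]: "act k (\<lambda>w. f w - h w) = (\<lambda>w. act k f w - act k h w)"
  and act_mult [simp]: "act k (\<lambda>w. c * f w) = (\<lambda>w. c * act k f w)"
  and act_minus [simp]: "act k (\<lambda>w. - f w) = (\<lambda>w. - act k f w)"
  by (simp_all add: act_def fun_eq_iff)

lemma orbit_sum_zero [simp]: "orbit_sum (\<lambda>_. 0) = (\<lambda>_. 0)"
  and orbit_sum_add [simp]: "orbit_sum (\<lambda>w. f w + h w) = (\<lambda>w. orbit_sum f w + orbit_sum h w)"
  and orbit_sum_diff [simp]: "orbit_sum (\<lambda>w. f w - h w) = (\<lambda>w. orbit_sum f w - orbit_sum h w)"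
  and orbit_sum_mult [simp]: "orbit_sum (\<lambda>w. c * f w) = (\<lambda>w. c * orbit_sum f w)"
  and orbit_sum_minus [simp]: "orbit_sum (\<lambda>w. - f w) = (\<lambda>w. - orbit_sum f w)"
  by (simp_all add: orbit_sum_def sum.distrib sum_subtractf sum_distrib_left sum_negf)

lemma sum_act_shift: "(\<Sum>i<r. act (i + k) f w) = (\<Sum>i<r. act i f w)"
  by (rule sum_lessThan_shift_periodic) (metis act_mod mod_add_self2)

lemma orbit_sum_act [simp]: "orbit_sum (act k f) = orbit_sum f"
  by (simp add: orbit_sum_def act_act sum_act_shift fun_eq_iff)

lemma act_orbit_sum [simp]: "act k (orbit_sum f) = orbit_sum f"
proof -
  have "act k (orbit_sum f) = (\<lambda>w. \<Sum>i<r. act k (act i f) w)"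
    by (simp add: orbit_sum_def act_def fun_eq_iff)
  then show ?thesis
    by (simp add: act_act add.commute sum_act_shift orbit_sum_def)
qed

lemma orbit_sum_orbit_sum: "orbit_sum (orbit_sum f) = (\<lambda>w. of_nat r * orbit_sum f w)"
  by (simp add: orbit_sum_def[of "orbit_sum f"])

lemma avg_eq: "avg f = (\<lambda>w. inverse (of_nat r) * orbit_sum f w)"
  by (simp add: avg_def fun_eq_iff field_simps)

lemma act_avg [simp]: "act k (avg f) = avg f"
  by (simp add: avg_eq)

lemma orbit_sum_avg [simp]: "orbit_sum (avg f) = orbit_sum f"
  using order_pos by (simp add: avg_eq orbit_sum_orbit_sum fun_eq_iff)

lemma act_eq_self_if_act_minus_one_eq_self:
  assumes fixed: "act (r - 1) f = f"
  shows "act k f = f"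
proof -
  have "f w = 0" if "\<not> R w" for w
    using fun_cong[OF fixed, of w] that by (simp add: act_def)
  then have act_r_f: "act r f = f"
    by (rule act_order_eq)
  have "act 1 f = act 1 (act (r - 1) f)"
    using fixed by simp
  also have "\<dots> = act r f"
    using order_pos by (simp add: act_act)
  finally have act_1_f: "act 1 f = f"
    using act_r_f by simp
  show ?thesis
  proof (induction k)
    case 0
    show ?case using act_r_f act_mod[of r] act_mod[of 0] by simp
  next
    case (Suc k)
    have "act (Suc k) f = act 1 (act k f)"
      by (simp add: act_act)
    then show ?case using Suc act_1_f by simp
  qed
qed

lemma diff_act_add_orbit_sum_eq_0D:
  assumes eq_0: "(\<lambda>w. f w - act k f w + of_nat r * orbit_sum h w) = (\<lambda>_. 0)"
  shows "orbit_sum h = (\<lambda>_. 0)" and "act k f = f"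
proof -
  have "(\<lambda>w. of_nat r * (of_nat r * orbit_sum h w)) = orbit_sum (\<lambda>_. 0)"
    by (subst eq_0 [symmetric]) (simp add: orbit_sum_orbit_sum)
  then show h_0: "orbit_sum h = (\<lambda>_. 0)"
    using order_pos by (simp add: fun_eq_iff)
  have "f w - act k f w = 0" for w
    using fun_cong[OF eq_0, of w] h_0 by simp
  then show "act k f = f"
    by (simp add: fun_eq_iff)
qed

lemma sq_summable_act:
  assumes "(\<lambda>w. (cmod (f w))\<^sup>2) summable_on UNIV"
  shows "(\<lambda>w. (cmod (act k f w))\<^sup>2) summable_on UNIV"
proof -
  let ?j = "(r - k mod r) mod r"
  have "(\<lambda>w. (cmod (f w))\<^sup>2) summable_on g ?j ` {w. R w}"
    using assms by (rule summable_on_subset) simp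
  then have "(\<lambda>w. (cmod (f (g ?j w)))\<^sup>2) summable_on {w. R w}"
    by (simp add: summable_on_reindex[OF inj_on_g] o_def)
  then show ?thesis
    by (rule summable_on_cong_neutral[THEN iffD1, rotated -1]) (auto simp: act_def)
qed

lemma cyclic_action_conj:
  assumes "\<And>w. \<sigma> (\<sigma> w) = w"
  shows "cyclic_action (R \<circ> \<sigma>) r (\<lambda>k. \<sigma> \<circ> g k \<circ> \<sigma>)"
  using assms by unfold_locales (simp_all add: order_pos closed g_add g_mod g_0)

end

lemma rw_lmulA:
  assumes "0 < m" and "rw m n w"
  shows "rw m n (lmulA m k w)"
proof (cases w)
  case (Cons l r)
  then show ?thesis using assms by (cases l) (simp_all add: lmulA_def)
qed (use assms in \<open>simp add: lmulA_def\<close>)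

lemma lmulA_mod: "lmulA m (k mod m) w = lmulA m k w"
  by (simp only: lmulA_def mod_add_left_eq mod_mod_trivial)

lemma lmulA_0:
  assumes "rw m n w"
  shows "lmulA m 0 w = w"
proof (cases w)
  case (Cons l r)
  then show ?thesis using assms by (cases l) (simp_all add: lmulA_def)
qed (simp add: lmulA_def)

lemma lmulA_add:
  assumes "rw m n w"
  shows "lmulA m a (lmulA m b w) = lmulA m (a + b) w"
proof (cases w)
  case (Cons l r)
  then show ?thesis using assms
    by (cases l) (auto simp: lmulA_def mod_add_right_eq add.assoc dvd_add_right_iff dvd_add_left_iff
        nat_dvd_not_less split: list.split letter.split)
qed (auto simp: lmulA_def mod_add_right_eq dvd_add_right_iff dvd_add_left_iff)

lemma cyclic_action_lmulA: "0 < m \<Longrightarrow> cyclic_action (rw m n) m (lmulA m)"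
  by unfold_locales (simp_all add: rw_lmulA lmulA_add lmulA_mod lmulA_0)

(* Interchanging the two factors turns lmulB into lmulA. *)
fun swap_letter :: "letter \<Rightarrow> letter" where
  "swap_letter (LA i) = LB i"
| "swap_letter (LB i) = LA i"

lemma swap_letter_involution [simp]: "swap_letter \<circ> swap_letter = id"
proof
  show "(swap_letter \<circ> swap_letter) l = id l" for l
    by (cases l) simp_all
qed

lemma rw_map_swap_letter: "rw m n (map swap_letter w) = rw n m w"
proof (induction w)
  case (Cons l w)
  then show ?case by (cases l; cases w) (auto split: letter.split)
qed simp

lemma lmulB_eq_swap_lmulA: "lmulB n k w = map swap_letter (lmulA n k (map swap_letter w))"
proof (cases w)
  case (Cons l r)
  then show ?thesis by (cases l) (simp_all add: lmulA_def lmulB_def)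
qed (simp add: lmulA_def lmulB_def)

lemma cyclic_action_lmulB:
  assumes "0 < n"
  shows "cyclic_action (rw m n) n (lmulB n)"
proof -
  have "cyclic_action (rw n m \<circ> map swap_letter) n (\<lambda>k. map swap_letter \<circ> lmulA n k \<circ> map swap_letter)"
    by (rule cyclic_action.cyclic_action_conj[OF cyclic_action_lmulA[OF assms]]) simp
  moreover have "rw n m \<circ> map swap_letter = rw m n"
    by (simp add: fun_eq_iff rw_map_swap_letter)
  moreover have "(\<lambda>k. map swap_letter \<circ> lmulA n k \<circ> map swap_letter) = lmulB n"
    by (simp add: fun_eq_iff lmulB_eq_swap_lmulA)
  ultimately show ?thesis by simp
qed

lemma l2_add:
  assumes f: "f \<in> l2 m n" and g: "g \<in> l2 m n"
  shows "(\<lambda>w. f w + g w) \<in> l2 m n"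
proof -
  have bound: "(cmod (a + b))\<^sup>2 \<le> 2 * (cmod a)\<^sup>2 + 2 * (cmod b)\<^sup>2" for a b :: complex
  proof -
    have "(cmod (a + b))\<^sup>2 \<le> (cmod a + cmod b)\<^sup>2"
      by (simp add: norm_triangle_ineq power_mono)
    also have "\<dots> \<le> 2 * (cmod a)\<^sup>2 + 2 * (cmod b)\<^sup>2"
      using zero_le_power2[of "cmod a - cmod b"] unfolding power2_sum power2_diff by linarith
    finally show ?thesis .
  qed
  have "(\<lambda>w. 2 * (cmod (f w))\<^sup>2 + 2 * (cmod (g w))\<^sup>2) summable_on UNIV"
    using f g by (intro summable_on_add summable_on_cmult_right) (simp_all add: l2_def)
  then have "(\<lambda>w. (cmod (f w + g w))\<^sup>2) summable_on UNIV"
    by (rule summable_on_comparison_test) (simp_all add: bound)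
  then show ?thesis
    using f g by (simp add: l2_def)
qed

lemma l2_mult:
  assumes "f \<in> l2 m n"
  shows "(\<lambda>w. c * f w) \<in> l2 m n"
proof -
  have "(\<lambda>w. (cmod c)\<^sup>2 * (cmod (f w))\<^sup>2) summable_on UNIV"
    using assms by (intro summable_on_cmult_right) (simp add: l2_def)
  then show ?thesis
    using assms by (simp add: l2_def norm_mult power_mult_distrib)
qed

lemma l2_diff: "f \<in> l2 m n \<Longrightarrow> g \<in> l2 m n \<Longrightarrow> (\<lambda>w. f w - g w) \<in> l2 m n"
  using l2_add[of f m n "\<lambda>w. (- 1) * g w"] l2_mult[of g m n "- 1"] by simp

locale free_product =
  fixes m n :: nat
  assumes two_le_m: "2 \<le> m" and two_le_n: "2 \<le> n"
begin

sublocale S: cyclic_action "rw m n" m "lmulA m"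
  rewrites "cyclic_action.act (rw m n) m (lmulA m) = actS m n"
    and "cyclic_action.orbit_sum (rw m n) m (lmulA m) = sumS m n"
    and "cyclic_action.avg (rw m n) m (lmulA m) = projP m n"
proof -
  show S: "cyclic_action (rw m n) m (lmulA m)"
    using two_le_m by (simp add: cyclic_action_lmulA)
  show act: "cyclic_action.act (rw m n) m (lmulA m) = actS m n"
    by (simp add: fun_eq_iff cyclic_action.act_def[OF S] actS_def)
  show sum: "cyclic_action.orbit_sum (rw m n) m (lmulA m) = sumS m n"
    by (simp add: fun_eq_iff cyclic_action.orbit_sum_def[OF S] sumS_def act)
  show "cyclic_action.avg (rw m n) m (lmulA m) = projP m n"
    by (simp add: fun_eq_iff cyclic_action.avg_def[OF S] projP_def sum)
qed

sublocale T: cyclic_action "rw m n" n "lmulB n"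
  rewrites "cyclic_action.act (rw m n) n (lmulB n) = actT m n"
    and "cyclic_action.orbit_sum (rw m n) n (lmulB n) = sumT m n"
    and "cyclic_action.avg (rw m n) n (lmulB n) = projQ m n"
proof -
  show T: "cyclic_action (rw m n) n (lmulB n)"
    using two_le_n by (simp add: cyclic_action_lmulB)
  show act: "cyclic_action.act (rw m n) n (lmulB n) = actT m n"
    by (simp add: fun_eq_iff cyclic_action.act_def[OF T] actT_def)
  show sum: "cyclic_action.orbit_sum (rw m n) n (lmulB n) = sumT m n"
    by (simp add: fun_eq_iff cyclic_action.orbit_sum_def[OF T] sumT_def act)
  show "cyclic_action.avg (rw m n) n (lmulB n) = projQ m n"
    by (simp add: fun_eq_iff cyclic_action.avg_def[OF T] projQ_def sum)
qed

lemma l2_actS: "f \<in> l2 m n \<Longrightarrow> actS m n k f \<in> l2 m n"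
  using S.sq_summable_act by (simp add: l2_def actS_def)

lemma l2_actT: "f \<in> l2 m n \<Longrightarrow> actT m n k f \<in> l2 m n"
  using T.sq_summable_act by (simp add: l2_def actT_def)

lemma infinite_reduced_words: "infinite {w. rw m n w}"
proof -
  define word :: "nat \<Rightarrow> letter list" where "word k = concat (replicate k [LA 1, LB 1])" for k
  have "rw m n (word k)" for k
  proof (induction k)
    case (Suc k)
    have "case word k of LB _ # _ \<Rightarrow> False | _ \<Rightarrow> True"
      by (cases k) (simp_all add: word_def)
    with Suc show ?case
      using two_le_m two_le_n by (simp add: word_def)
  qed (simp add: word_def)
  then have "range word \<subseteq> {w. rw m n w}"
    by auto
  moreover have "inj word"
  proof (rule injI)
    fix k l assume "word k = word l"
    then have "length (word k) = length (word l)" by simp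
    then show "k = l" by (simp add: word_def length_concat sum_list_replicate)
  qed
  ultimately show ?thesis
    using infinite_super range_inj_infinite by blast
qed

lemma invariant_constant_on_reduced_words:
  assumes S_inv: "\<And>k. actS m n k y = y" and T_inv: "\<And>k. actT m n k y = y"
    and "rw m n w"
  shows "y w = y []"
  using \<open>rw m n w\<close>
proof (induction w)
  case (Cons l w)
  show ?case
  proof (cases l)
    case (LA i)
    with Cons.prems have "0 < i" "i < m" "rw m n w" by simp_all
    then have "y (l # w) = actS m n i y (l # w)"
      using LA S_inv[of i] by simp
    also have "\<dots> = y w"
      using LA Cons.prems \<open>i < m\<close> by (simp add: actS_def lmulA_def)
    finally show ?thesis
      using Cons.IH \<open>rw m n w\<close> by simp
  next
    case (LB j)
    with Cons.prems have "0 < j" "j < n" "rw m n w" by simp_all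
    then have "y (l # w) = actT m n j y (l # w)"
      using LB T_inv[of j] by simp
    also have "\<dots> = y w"
      using LB Cons.prems \<open>j < n\<close> by (simp add: actT_def lmulB_def)
    finally show ?thesis
      using Cons.IH \<open>rw m n w\<close> by simp
  qed
qed simp

lemma l2_invariant_eq_0:
  assumes y: "y \<in> l2 m n"
    and S_inv: "\<And>k. actS m n k y = y" and T_inv: "\<And>k. actT m n k y = y"
  shows "y = (\<lambda>_. 0)"
proof -
  define c where "c = y []"
  have const: "y w = c" if "rw m n w" for w
    unfolding c_def using invariant_constant_on_reduced_words[OF S_inv T_inv that] .
  have "(\<lambda>w. (cmod (y w))\<^sup>2) summable_on UNIV"
    using y by (simp add: l2_def)
  then have "(\<lambda>w. (cmod (y w))\<^sup>2) summable_on {w. rw m n w}"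
    by (rule summable_on_subset) simp
  then have "(\<lambda>_. (cmod c)\<^sup>2) summable_on {w. rw m n w}"
    by (rule summable_on_cong[THEN iffD1, rotated]) (simp add: const)
  then have "c = 0"
    using infsum_diverge_constant[OF infinite_reduced_words, of "(cmod c)\<^sup>2"] by auto
  then show ?thesis
    using y const by (auto simp: l2_def fun_eq_iff)
qed

definition bdry :: "vec \<Rightarrow> vec \<Rightarrow> vec" where
  "bdry x1 x2 = (\<lambda>w. (x1 w - opS m n x1 w) + (x2 w - opT m n x2 w))"

lemma l2_bdry: "x1 \<in> l2 m n \<Longrightarrow> x2 \<in> l2 m n \<Longrightarrow> bdry x1 x2 \<in> l2 m n"
  unfolding bdry_def opS_def opT_def by (intro l2_add l2_diff l2_actS l2_actT)

lemma Lap1_fst_eq: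
  assumes "x1 \<in> l2 m n"
  shows "Lap1_fst m n x1 x2
    = (\<lambda>w. bdry x1 x2 w - opSi m n (bdry x1 x2) w + of_nat m * sumS m n x1 w)"
proof -
  have "opSi m n (opS m n x1) = x1"
    using assms two_le_m by (simp add: opSi_def opS_def S.act_act S.act_order_eq l2_def)
  then show ?thesis
    by (simp add: Lap1_fst_def bdry_def opSi_def fun_eq_iff algebra_simps)
qed

lemma Lap1_snd_eq:
  assumes "x2 \<in> l2 m n"
  shows "Lap1_snd m n x1 x2
    = (\<lambda>w. bdry x1 x2 w - opTi m n (bdry x1 x2) w + of_nat n * sumT m n x2 w)"
proof -
  have "opTi m n (opT m n x2) = x2"
    using assms two_le_n by (simp add: opTi_def opT_def T.act_act T.act_order_eq l2_def)
  then show ?thesis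
    by (simp add: Lap1_snd_def bdry_def opTi_def fun_eq_iff algebra_simps)
qed

lemma Lap1_eq_0_iff:
  assumes x1: "x1 \<in> l2 m n" and x2: "x2 \<in> l2 m n"
  shows "(Lap1_fst m n x1 x2 = (\<lambda>_. 0) \<and> Lap1_snd m n x1 x2 = (\<lambda>_. 0)) \<longleftrightarrow>
    sumS m n x1 = (\<lambda>_. 0) \<and> sumT m n x2 = (\<lambda>_. 0) \<and> bdry x1 x2 = (\<lambda>_. 0)"
proof
  assume "Lap1_fst m n x1 x2 = (\<lambda>_. 0) \<and> Lap1_snd m n x1 x2 = (\<lambda>_. 0)"
  then have fst: "(\<lambda>w. bdry x1 x2 w - actS m n (m - 1) (bdry x1 x2) w + of_nat m * sumS m n x1 w) = (\<lambda>_. 0)"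
    and snd: "(\<lambda>w. bdry x1 x2 w - actT m n (n - 1) (bdry x1 x2) w + of_nat n * sumT m n x2 w) = (\<lambda>_. 0)"
    using Lap1_fst_eq[OF x1] Lap1_snd_eq[OF x2] by (simp_all add: opSi_def opTi_def)
  have "actS m n k (bdry x1 x2) = bdry x1 x2" for k
    using S.act_eq_self_if_act_minus_one_eq_self S.diff_act_add_orbit_sum_eq_0D(2)[OF fst] by blast
  moreover have "actT m n k (bdry x1 x2) = bdry x1 x2" for k
    using T.act_eq_self_if_act_minus_one_eq_self T.diff_act_add_orbit_sum_eq_0D(2)[OF snd] by blast
  ultimately have "bdry x1 x2 = (\<lambda>_. 0)"
    using l2_invariant_eq_0 l2_bdry[OF x1 x2] by blast
  then show "sumS m n x1 = (\<lambda>_. 0) \<and> sumT m n x2 = (\<lambda>_. 0) \<and> bdry x1 x2 = (\<lambda>_. 0)"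
    using S.diff_act_add_orbit_sum_eq_0D(1)[OF fst] T.diff_act_add_orbit_sum_eq_0D(1)[OF snd] by blast
next
  assume "sumS m n x1 = (\<lambda>_. 0) \<and> sumT m n x2 = (\<lambda>_. 0) \<and> bdry x1 x2 = (\<lambda>_. 0)"
  then show "Lap1_fst m n x1 x2 = (\<lambda>_. 0) \<and> Lap1_snd m n x1 x2 = (\<lambda>_. 0)"
    by (simp add: Lap1_fst_eq[OF x1] Lap1_snd_eq[OF x2] opSi_def opTi_def)
qed

definition harmonic_form :: "vec \<Rightarrow> vec \<Rightarrow> bool" where
  "harmonic_form x1 x2 \<longleftrightarrow>
    (\<exists>z1 \<in> l2 m n. \<exists>z2 \<in> l2 m n. \<exists>a.
       (\<exists>b \<in> l2 m n. a = (\<lambda>w. b w - projP m n b w)) \<and>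
       (\<exists>c \<in> l2 m n. a = (\<lambda>w. c w - projQ m n c w)) \<and>
       x1 = (\<lambda>w. z1 w - projP m n z1 w) \<and>
       x2 = (\<lambda>w. z2 w - projQ m n z2 w) \<and>
       (\<lambda>w. z1 w - opS m n z1 w) = (\<lambda>w. a w / complex_of_real (sqrt 2)) \<and>
       (\<lambda>w. z2 w - opT m n z2 w) = (\<lambda>w. - a w / complex_of_real (sqrt 2)))"

lemma harmonic_form_if_ker:
  assumes x1: "x1 \<in> l2 m n" and x2: "x2 \<in> l2 m n"
    and ker: "sumS m n x1 = (\<lambda>_. 0)" "sumT m n x2 = (\<lambda>_. 0)" "bdry x1 x2 = (\<lambda>_. 0)"
  shows "harmonic_form x1 x2"
proof -
  define a where "a = (\<lambda>w. complex_of_real (sqrt 2) * (x1 w - opS m n x1 w))"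
  have "x1 w - opS m n x1 w = - (x2 w - opT m n x2 w)" for w
    using ker(3) eq_neg_iff_add_eq_0 unfolding bdry_def by metis
  then have a_T: "a = (\<lambda>w. - complex_of_real (sqrt 2) * (x2 w - opT m n x2 w))"
    by (simp only: a_def mult_minus_left mult_minus_right)
  have a: "a \<in> l2 m n"
    unfolding a_def opS_def by (intro l2_mult l2_diff l2_actS x1)
  have "sumS m n a = (\<lambda>_. 0)"
    by (simp add: a_def opS_def)
  then have a_P: "\<exists>b \<in> l2 m n. a = (\<lambda>w. b w - projP m n b w)"
    using a by (intro bexI[of _ a]) (simp_all add: projP_def)
  have "sumT m n a = (\<lambda>_. 0)"
    by (simp add: a_T opT_def)
  then have a_Q: "\<exists>c \<in> l2 m n. a = (\<lambda>w. c w - projQ m n c w)"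
    using a by (intro bexI[of _ a]) (simp_all add: projQ_def)
  have x1_P: "x1 = (\<lambda>w. x1 w - projP m n x1 w)" and x2_Q: "x2 = (\<lambda>w. x2 w - projQ m n x2 w)"
    using ker by (simp_all add: projP_def projQ_def)
  have x1_a: "(\<lambda>w. x1 w - opS m n x1 w) = (\<lambda>w. a w / complex_of_real (sqrt 2))"
    by (simp add: a_def)
  have x2_a: "(\<lambda>w. x2 w - opT m n x2 w) = (\<lambda>w. - a w / complex_of_real (sqrt 2))"
    by (simp add: a_T)
  show ?thesis
    unfolding harmonic_form_def
    by (rule bexI[of _ x1], rule bexI[of _ x2], rule exI[of _ a],
        intro conjI a_P a_Q x1_P x2_Q x1_a x2_a) (simp_all add: x1 x2)
qed

lemma ker_if_harmonic_form:
  assumes "harmonic_form x1 x2"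
  shows "sumS m n x1 = (\<lambda>_. 0) \<and> sumT m n x2 = (\<lambda>_. 0) \<and> bdry x1 x2 = (\<lambda>_. 0)"
proof -
  obtain z1 z2 a where x1: "x1 = (\<lambda>w. z1 w - projP m n z1 w)"
    and x2: "x2 = (\<lambda>w. z2 w - projQ m n z2 w)"
    and z1: "(\<lambda>w. z1 w - opS m n z1 w) = (\<lambda>w. a w / complex_of_real (sqrt 2))"
    and z2: "(\<lambda>w. z2 w - opT m n z2 w) = (\<lambda>w. - a w / complex_of_real (sqrt 2))"
    using assms unfolding harmonic_form_def by (elim bexE exE conjE) (rule that; assumption)
  have "(\<lambda>w. x1 w - opS m n x1 w) = (\<lambda>w. z1 w - opS m n z1 w)"
    and "(\<lambda>w. x2 w - opT m n x2 w) = (\<lambda>w. z2 w - opT m n z2 w)"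
    by (simp_all add: x1 x2 opS_def opT_def)
  then have "bdry x1 x2 = (\<lambda>_. 0)"
    using z1 z2 by (simp add: bdry_def fun_eq_iff diff_divide_distrib)
  then show ?thesis
    by (simp add: x1 x2)
qed

end

theorem lemma4p4:
  fixes m n :: nat and x1 x2 :: vec
  assumes "m \<ge> 2" and "n \<ge> 3"
    and "x1 \<in> l2 m n" and "x2 \<in> l2 m n"
  shows "(Lap1_fst m n x1 x2 = (\<lambda>_. 0) \<and> Lap1_snd m n x1 x2 = (\<lambda>_. 0)) \<longleftrightarrow>
    (\<exists>z1 \<in> l2 m n. \<exists>z2 \<in> l2 m n. \<exists>a.
       (\<exists>b \<in> l2 m n. a = (\<lambda>w. b w - projP m n b w)) \<and>
       (\<exists>c \<in> l2 m n. a = (\<lambda>w. c w - projQ m n c w)) \<and>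
       x1 = (\<lambda>w. z1 w - projP m n z1 w) \<and>
       x2 = (\<lambda>w. z2 w - projQ m n z2 w) \<and>
       (\<lambda>w. z1 w - opS m n z1 w) = (\<lambda>w. a w / complex_of_real (sqrt 2)) \<and>
       (\<lambda>w. z2 w - opT m n z2 w) = (\<lambda>w. - a w / complex_of_real (sqrt 2)))"
proof -
  interpret free_product m n
    using assms(1,2) by unfold_locales simp_all
  show ?thesis
    unfolding Lap1_eq_0_iff[OF assms(3,4)] harmonic_form_def[symmetric]
    using harmonic_form_if_ker[OF assms(3,4)] ker_if_harmonic_form by blast
qed

end
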